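(* For any $\sigma>0$ there exists $\varepsilon_0>0$ such that for every $\epsilon\in(-\varepsilon_0,\varepsilon_0)\setminus\{0\}$ and every admissible $(d,\eta)$ (i.e. $d\in(\sigma,1/\sigma)$, $\eta\in\mathbb R^6$, $|\eta|\le 1/\sigma$, $\delta=|\epsilon|d$, $\xi=\xi_0+\sqrt\delta\eta$) there are radii $R^1_\delta,R^2_\delta>0$ with $$B(\xi,R^1_\delta\sqrt\delta)\subset\{x\in\Omega:0<u_0(x)+\epsilon v_0(x)<PU_{\delta,\xi}(x)\}\cap B(\xi,\delta^{1/4})\subset B(\xi,R^2_\delta\sqrt\delta),$$ and $R^1_\delta,R^2_\delta=R_0+o(1)$ as $\epsilon\to0$, where $R_0:=\big(\alpha_6/u_0(\xi_0)\big)^{1/4}$.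
   Context: $\Omega\subset\mathbb R^6$ bounded smooth domain; $\lambda_0>0$; $u_0\in H^1_0(\Omega)$ solves $-\Delta u_0=|u_0|u_0+\lambda_0u_0$ in $\Omega$, $u_0=0$ on $\partial\Omega$; $\xi_0\in\Omega$ with $\max_\Omega u_0=u_0(\xi_0)>0$ and $\lambda_0=2u_0(\xi_0)$; $u_0$ is non-degenerate and $v_0\in H^1_0(\Omega)$ solves $-\Delta v_0-(2|u_0|+\lambda_0)v_0=u_0$. $\alpha_6=24$, $U_{\delta,\xi}(x)=\alpha_6\delta^2/(\delta^2+|x-\xi|^2)^2$, and $PU_{\delta,\xi}\in H^1_0(\Omega)$ solves $-\Delta PU_{\delta,\xi}=U_{\delta,\xi}^2$ in $\Omega$. $B(\xi,r)$ is the open ball of radius $r$ centered at $\xi$. *)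

theory Defs
  imports "HOL-Analysis.Analysis"
begin

type_synonym R6 = "real^6"

definition pd :: "6 \<Rightarrow> (R6 \<Rightarrow> real) \<Rightarrow> R6 \<Rightarrow> real" where
  "pd i f x = deriv (\<lambda>t. f (x + t *\<^sub>R axis i 1)) 0"

fun iter_pd :: "6 list \<Rightarrow> (R6 \<Rightarrow> real) \<Rightarrow> R6 \<Rightarrow> real" where
  "iter_pd [] f = f"
| "iter_pd (i # is) f = pd i (iter_pd is f)"

definition Ck_on :: "nat \<Rightarrow> R6 set \<Rightarrow> (R6 \<Rightarrow> real) \<Rightarrow> bool" where
  "Ck_on k S f \<longleftrightarrow>
     (\<forall>is. length is \<le> k \<longrightarrow>
        continuous_on S (iter_pd is f) \<and>
        (length is < k \<longrightarrow> (\<forall>i. \<forall>x\<in>S.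
            (\<lambda>t. iter_pd is f (x + t *\<^sub>R axis i 1)) differentiable (at 0))))"

definition smooth_on :: "R6 set \<Rightarrow> (R6 \<Rightarrow> real) \<Rightarrow> bool" where
  "smooth_on S f \<longleftrightarrow> (\<forall>k. Ck_on k S f)"

definition laplacian :: "(R6 \<Rightarrow> real) \<Rightarrow> R6 \<Rightarrow> real" where
  "laplacian f x = (\<Sum>i\<in>UNIV. pd i (pd i f) x)"

definition smooth_bounded_domain :: "R6 set \<Rightarrow> bool" where
  "smooth_bounded_domain \<Omega> \<longleftrightarrow> open \<Omega> \<and> bounded \<Omega> \<and> connected \<Omega> \<and> \<Omega> \<noteq> {} \<and>
     (\<exists>\<rho>. smooth_on UNIV \<rho> \<and> \<Omega> = {x. \<rho> x < 0} \<and>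
          (\<forall>x. \<rho> x = 0 \<longrightarrow> (\<exists>i. pd i \<rho> x \<noteq> 0)))"

definition dirichlet_class :: "R6 set \<Rightarrow> (R6 \<Rightarrow> real) \<Rightarrow> bool" where
  "dirichlet_class \<Omega> f \<longleftrightarrow> Ck_on 2 \<Omega> f \<and> continuous_on (closure \<Omega>) f \<and>
     (\<forall>x\<in>frontier \<Omega>. f x = 0)"

definition alpha6 :: real where "alpha6 = 24"

definition U_bubble :: "real \<Rightarrow> R6 \<Rightarrow> R6 \<Rightarrow> real" where
  "U_bubble \<delta> \<xi> x = alpha6 * \<delta>\<^sup>2 / (\<delta>\<^sup>2 + (norm (x - \<xi>))\<^sup>2)\<^sup>2"

end

(*
  The projected bubble is squeezed between U - K\<delta>\<^sup>2 and U by the maximum principle, K depending only on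
  the distance from xi0 to the boundary, while near its maximum point u0 + \<epsilon>v0 is squeezed between
  u0(xi0) - |\<epsilon>| sup|v0| - osc and u0(xi0) + |\<epsilon>| sup|v0|, osc being the oscillation of u0 on a ball
  shrinking with \<epsilon>. So the region {0 < u0 + \<epsilon>v0 < PU} near \<xi> lies between two superlevel sets of the
  bubble profile \<alpha>\<delta>\<^sup>2/(\<delta>\<^sup>2 + r\<^sup>2)\<^sup>2, which are balls of radius \<surd>(\<surd>(\<alpha>/L) - \<delta>)\<cdot>\<surd>\<delta>; after division
  by \<surd>\<delta> both radii tend to (\<alpha>/u0(xi0))\<^sup>1\<^sup>/\<^sup>4. Only continuity of u0 and v0, the maximality of
  u0(xi0) and the equation for PU enter.
*)

theory Submission
  imports Defs
begin

section \<open>Second derivatives along coordinate lines and the maximum principle\<close>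

lemma norm_add_scaleR_axis_sq:
  fixes a :: "real^'n"
  shows "(norm (a + t *\<^sub>R axis i 1))\<^sup>2 = (norm a)\<^sup>2 + 2 * t * a $ i + t\<^sup>2"
  unfolding power2_norm_eq_inner
  by (simp add: inner_commute inner_axis inner_axis_axis power2_eq_square algebra_simps)

lemma sum_sq_vec_nth_eq_norm_sq: "(\<Sum>i\<in>UNIV. (a $ i)\<^sup>2) = (norm (a :: real^'n))\<^sup>2"
  unfolding power2_norm_eq_inner by (simp add: inner_vec_def power2_eq_square)

lemma dist_add_scaleR_axis [simp]: "dist p (p + t *\<^sub>R axis i (1::real)) = \<bar>t\<bar>"
  by (simp add: dist_norm)

lemma sqrt_sqrt_eq_powr_quarter: "0 \<le> x \<Longrightarrow> sqrt (sqrt x) = x powr (1/4)"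
  by (simp add: sqrt_def root_powr_inverse powr_powr)

lemma less_sqrt_iff_sq_less: "0 \<le> (x::real) \<Longrightarrow> x < sqrt y \<longleftrightarrow> x\<^sup>2 < y"
  by (metis less_le_trans not_le real_le_lsqrt real_less_rsqrt real_sqrt_ge_0_iff)

lemma sq_less_sq_iff: "0 \<le> (x::real) \<Longrightarrow> 0 \<le> y \<Longrightarrow> x\<^sup>2 < y\<^sup>2 \<longleftrightarrow> x < y"
  by (metis not_le power_mono_iff zero_less_numeral)

lemma second_deriv_nonpos_at_local_max:
  fixes g g' :: "real \<Rightarrow> real"
  assumes r: "r > 0"
    and deriv: "\<And>t. \<bar>t\<bar> < r \<Longrightarrow> (g has_real_derivative g' t) (at t)"
    and deriv2: "(g' has_real_derivative c) (at 0)"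
    and max: "\<And>t. \<bar>t\<bar> < r \<Longrightarrow> g t \<le> g 0"
  shows "c \<le> 0"
proof (rule ccontr)
  assume "\<not> c \<le> 0"
  then have "c > 0" by simp
  have g'0: "g' 0 = 0"
    using DERIV_local_max[OF deriv[of 0] r] max r by auto
  obtain d where d: "d > 0" "\<And>s. s > 0 \<Longrightarrow> s < d \<Longrightarrow> g' 0 < g' (0 + s)"
    using DERIV_pos_inc_right[OF deriv2 \<open>c > 0\<close>] by blast
  define t where "t = min d r / 2"
  have t: "0 < t" "t < d" "t < r" using d r by (auto simp: t_def)
  have "g 0 < g t"
  proof (rule DERIV_pos_imp_increasing_open[OF t(1)])
    fix x assume "0 < x" "x < t"
    then show "\<exists>y. DERIV g x :> y \<and> 0 < y"
      using deriv[of x] d(2)[of x] g'0 t by auto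
  next
    show "continuous_on {0..t} g"
      by (rule DERIV_continuous_on[where D = g'])
        (use deriv t in \<open>auto intro: has_field_derivative_at_within\<close>)
  qed
  with max[of t] t show False by auto
qed

definition has_second_partial :: "(real^'n \<Rightarrow> real) \<Rightarrow> real^'n \<Rightarrow> 'n \<Rightarrow> real \<Rightarrow> bool" where
  "has_second_partial w p i c \<longleftrightarrow> (\<exists>r>0. \<exists>g'.
      (\<forall>t. \<bar>t\<bar> < r \<longrightarrow> ((\<lambda>s. w (p + s *\<^sub>R axis i 1)) has_real_derivative g' t) (at t)) \<and>
      (g' has_real_derivative c) (at 0))"

lemma has_second_partial_diff:
  assumes "has_second_partial f p i a" "has_second_partial g p i b"
  shows "has_second_partial (\<lambda>x. f x - g x) p i (a - b)"
proof -
  obtain r1 f' where f: "r1 > 0" "\<forall>t. \<bar>t\<bar> < r1 \<longrightarrow>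
      ((\<lambda>s. f (p + s *\<^sub>R axis i 1)) has_real_derivative f' t) (at t)" "(f' has_real_derivative a) (at 0)"
    using assms(1) unfolding has_second_partial_def by blast
  obtain r2 g' where g: "r2 > 0" "\<forall>t. \<bar>t\<bar> < r2 \<longrightarrow>
      ((\<lambda>s. g (p + s *\<^sub>R axis i 1)) has_real_derivative g' t) (at t)" "(g' has_real_derivative b) (at 0)"
    using assms(2) unfolding has_second_partial_def by blast
  show ?thesis
    unfolding has_second_partial_def
    by (rule exI[of _ "min r1 r2"], rule conjI, simp add: f g, rule exI[of _ "\<lambda>t. f' t - g' t"])
      (use f g in \<open>auto intro!: derivative_intros\<close>)
qed

lemma Ck_on_2_has_second_partial:
  assumes C2: "Ck_on 2 \<Omega> f" and "open \<Omega>" and p: "p \<in> \<Omega>"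
  shows "has_second_partial f p i (pd i (pd i f) p)"
proof -
  obtain r where r: "r > 0" "ball p r \<subseteq> \<Omega>" using openE[OF \<open>open \<Omega>\<close> p] by metis
  have line_in: "p + t *\<^sub>R axis i 1 \<in> \<Omega>" if "\<bar>t\<bar> < r" for t
    using that r(2) by auto
  have differentiable: "(\<lambda>t. iter_pd is f (x + t *\<^sub>R axis i 1)) differentiable (at 0)"
    if "length is < 2" "x \<in> \<Omega>" for "is" x
    using C2 that unfolding Ck_on_def by (meson less_imp_le)
  have "((\<lambda>s. f (p + s *\<^sub>R axis i 1)) has_real_derivative pd i f (p + t *\<^sub>R axis i 1)) (at t)"
    if "\<bar>t\<bar> < r" for t
  proof -
    let ?y = "p + t *\<^sub>R axis i 1"
    have "((\<lambda>s. f (?y + s *\<^sub>R axis i 1)) has_real_derivative pd i f ?y) (at 0)"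
      using differentiable[of "[]", OF _ line_in[OF that]] unfolding pd_def
      by (simp add: DERIV_deriv_iff_real_differentiable)
    moreover have "(\<lambda>s. f (?y + s *\<^sub>R axis i 1)) = (\<lambda>s. f (p + (s + t) *\<^sub>R axis i 1))"
      by (simp add: scaleR_add_left algebra_simps)
    ultimately show ?thesis
      using DERIV_shift[of "\<lambda>s. f (p + s *\<^sub>R axis i 1)" "pd i f ?y" 0 t] by simp
  qed
  moreover have "((\<lambda>t. pd i f (p + t *\<^sub>R axis i 1)) has_real_derivative pd i (pd i f) p) (at 0)"
    using differentiable[of "[i]", OF _ p] unfolding pd_def[of i "pd i f"]
    by (simp add: DERIV_deriv_iff_real_differentiable)
  ultimately show ?thesis
    unfolding has_second_partial_def
    by (intro exI[of _ r] conjI exI[of _ "\<lambda>t. pd i f (p + t *\<^sub>R axis i 1)"] r(1)) auto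
qed

definition has_laplacian :: "(real^'n \<Rightarrow> real) \<Rightarrow> real^'n \<Rightarrow> real \<Rightarrow> bool" where
  "has_laplacian w p L \<longleftrightarrow> (\<exists>c. (\<forall>i. has_second_partial w p i (c i)) \<and> sum c UNIV = L)"

lemma has_laplacian_diff:
  assumes "has_laplacian f p a" "has_laplacian g p b"
  shows "has_laplacian (\<lambda>x. f x - g x) p (a - b)"
proof -
  obtain c c' where "\<forall>i. has_second_partial f p i (c i)" "sum c UNIV = a"
    "\<forall>i. has_second_partial g p i (c' i)" "sum c' UNIV = b"
    using assms unfolding has_laplacian_def by blast
  then show ?thesis
    unfolding has_laplacian_def
    by (intro exI[of _ "\<lambda>i. c i - c' i"]) (simp add: has_second_partial_diff sum_subtractf)
qed

lemma Ck_on_2_has_laplacian: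
  "Ck_on 2 \<Omega> f \<Longrightarrow> open \<Omega> \<Longrightarrow> p \<in> \<Omega> \<Longrightarrow> has_laplacian f p (laplacian f p)"
  unfolding has_laplacian_def laplacian_def
  by (intro exI[of _ "\<lambda>i. pd i (pd i f) p"]) (simp add: Ck_on_2_has_second_partial)

lemma has_second_partial_nonpos_at_max:
  assumes "has_second_partial v p i c" "r > 0" "ball p r \<subseteq> S" "\<forall>y\<in>S. v y \<le> v p"
  shows "c \<le> 0"
proof -
  obtain r' v' where v': "r' > 0" "\<forall>t. \<bar>t\<bar> < r' \<longrightarrow>
      ((\<lambda>s. v (p + s *\<^sub>R axis i 1)) has_real_derivative v' t) (at t)" "(v' has_real_derivative c) (at 0)"
    using assms(1) unfolding has_second_partial_def by blast
  show ?thesis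
  proof (rule second_deriv_nonpos_at_local_max[where g' = v' and r = "min r r'"])
    fix t :: real assume t: "\<bar>t\<bar> < min r r'"
    then show "((\<lambda>s. v (p + s *\<^sub>R axis i 1)) has_real_derivative v' t) (at t)"
      using v'(2) by simp
    have "p + t *\<^sub>R axis i 1 \<in> S" using t assms(3) by (auto simp: subset_iff)
    then show "v (p + t *\<^sub>R axis i 1) \<le> v (p + 0 *\<^sub>R axis i 1)"
      using assms(4) by simp
  qed (use v' assms(2) in auto)
qed

lemma has_second_partial_add_dist_sq:
  assumes "has_second_partial w p i c"
  shows "has_second_partial (\<lambda>y. w y + e * (norm (y - x1))\<^sup>2) p i (c + 2 * e)"
proof -
  obtain r w' where w': "r > 0" "\<forall>t. \<bar>t\<bar> < r \<longrightarrow>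
      ((\<lambda>s. w (p + s *\<^sub>R axis i 1)) has_real_derivative w' t) (at t)" "(w' has_real_derivative c) (at 0)"
    using assms unfolding has_second_partial_def by blast
  define a where "a = (p - x1) $ i"
  have line: "(norm (p + s *\<^sub>R axis i 1 - x1))\<^sup>2 = (norm (p - x1))\<^sup>2 + 2 * s * a + s\<^sup>2" for s
  proof -
    have "p + s *\<^sub>R axis i 1 - x1 = (p - x1) + s *\<^sub>R axis i 1" by simp
    then show ?thesis by (simp only: a_def norm_add_scaleR_axis_sq)
  qed
  have "((\<lambda>s. w (p + s *\<^sub>R axis i 1) + e * (norm (p + s *\<^sub>R axis i 1 - x1))\<^sup>2)
      has_real_derivative w' t + e * (2 * a + 2 * t)) (at t)" if "\<bar>t\<bar> < r" for t
  proof -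
    have w'_t: "((\<lambda>s. w (p + s *\<^sub>R axis i 1)) has_real_derivative w' t) (at t)"
      using w'(2) that by simp
    show ?thesis
      unfolding line by (rule derivative_eq_intros w'_t refl | simp)+
  qed
  moreover have "((\<lambda>t. w' t + e * (2 * a + 2 * t)) has_real_derivative c + 2 * e) (at 0)"
    by (rule derivative_eq_intros w'(3) refl | simp)+
  ultimately show ?thesis
    unfolding has_second_partial_def
    by (intro exI[of _ r] conjI exI[of _ "\<lambda>t. w' t + e * (2 * a + 2 * t)"] w'(1)) auto
qed

text \<open>Perturbing \<open>w\<close> by \<open>e |y - x\<^sub>1|\<^sup>2\<close> turns the weak inequality \<open>\<Delta>w \<ge> 0\<close> into a strict one,
  so the maximum of the perturbation cannot be attained in the interior.\<close>
lemma weak_maximum_principle: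
  fixes w :: "real^'n \<Rightarrow> real"
  assumes "bounded \<Omega>" and "open \<Omega>"
    and cont: "continuous_on (closure \<Omega>) w"
    and boundary: "\<forall>x\<in>frontier \<Omega>. w x \<le> M"
    and subharmonic: "\<forall>p\<in>\<Omega>. \<exists>L\<ge>0. has_laplacian w p L"
  shows "\<forall>x\<in>\<Omega>. w x \<le> M"
proof (rule ccontr)
  assume "\<not> ?thesis"
  then obtain x1 where x1: "x1 \<in> \<Omega>" "w x1 > M" by auto
  have x1_cl: "x1 \<in> closure \<Omega>" using x1(1) closure_subset by blast
  obtain B where B: "\<forall>y\<in>closure \<Omega>. norm (y - x1) \<le> B"
    using bounded_closure[OF \<open>bounded \<Omega>\<close>] unfolding bounded_any_center[where a = x1]
    by (metis dist_norm norm_minus_commute)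
  define e where "e = (w x1 - M) / (2 * (B\<^sup>2 + 1))"
  have "e > 0" using x1 unfolding e_def by (intro divide_pos_pos) (auto simp: add_nonneg_pos)
  have eB: "e * B\<^sup>2 < w x1 - M"
  proof -
    have "B\<^sup>2 / (2 * (B\<^sup>2 + 1)) < 1" by (simp add: add_nonneg_pos)
    then have "(w x1 - M) * (B\<^sup>2 / (2 * (B\<^sup>2 + 1))) < (w x1 - M) * 1"
      using x1 by (intro mult_strict_left_mono) auto
    then show ?thesis by (simp add: e_def)
  qed
  define v where "v y = w y + e * (norm (y - x1))\<^sup>2" for y
  have "continuous_on (closure \<Omega>) v"
    unfolding v_def by (intro continuous_intros cont)
  then obtain p where p: "p \<in> closure \<Omega>" "\<forall>y\<in>closure \<Omega>. v y \<le> v p"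
    using continuous_attains_sup[of "closure \<Omega>" v] x1_cl \<open>bounded \<Omega>\<close>
    by (metis compact_closure empty_iff)
  have "p \<in> \<Omega>"
  proof (rule ccontr)
    assume "p \<notin> \<Omega>"
    then have "w p \<le> M" using p(1) boundary closure_Un_frontier by blast
    moreover have "e * (norm (p - x1))\<^sup>2 \<le> e * B\<^sup>2"
      using B p(1) \<open>e > 0\<close> by (intro mult_left_mono power_mono) auto
    moreover have "v x1 \<le> v p" using p(2) x1_cl by blast
    ultimately show False using eB by (simp add: v_def)
  qed
  then obtain c where c: "\<forall>i. has_second_partial w p i (c i)" "sum c UNIV \<ge> 0"
    using subharmonic unfolding has_laplacian_def by blast
  have "\<exists>i. c i + 2 * e > 0"
  proof (rule ccontr)
    assume "\<not> ?thesis"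
    then have "(\<Sum>i\<in>UNIV. c i + 2 * e) \<le> 0" by (simp add: sum_nonpos not_less)
    moreover have "real CARD('n) * (2 * e) > 0" using \<open>e > 0\<close> by simp
    ultimately show False using c(2) by (simp add: sum.distrib)
  qed
  then obtain i where "c i + 2 * e > 0" by blast
  moreover have "c i + 2 * e \<le> 0"
  proof -
    obtain r where "r > 0" "ball p r \<subseteq> closure \<Omega>"
      using openE[OF \<open>open \<Omega>\<close> \<open>p \<in> \<Omega>\<close>] closure_subset by (metis subset_trans)
    moreover have "has_second_partial v p i (c i + 2 * e)"
      unfolding v_def using c(1) by (intro has_second_partial_add_dist_sq) simp
    ultimately show ?thesis
      using has_second_partial_nonpos_at_max p(2) by blast
  qed
  ultimately show False by simp
qed

section \<open>The bubble\<close>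

lemma U_bubble_nonneg: "U_bubble \<delta> \<xi> y \<ge> 0"
  by (simp add: U_bubble_def alpha6_def)

lemma continuous_on_U_bubble: "\<delta> > 0 \<Longrightarrow> continuous_on S (U_bubble \<delta> \<xi>)"
  unfolding U_bubble_def[abs_def] by (intro continuous_intros) (auto simp: add_pos_nonneg)

lemma U_bubble_le_at_distance:
  assumes "a > 0" "a \<le> norm (y - \<xi>)"
  shows "U_bubble \<delta> \<xi> y \<le> alpha6 * \<delta>\<^sup>2 / a ^ 4"
proof -
  have "a ^ 4 \<le> ((norm (y - \<xi>))\<^sup>2)\<^sup>2" using assms by (simp add: power_mono flip: power_mult)
  also have "\<dots> \<le> (\<delta>\<^sup>2 + (norm (y - \<xi>))\<^sup>2)\<^sup>2" by (intro power_mono) auto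
  finally show ?thesis
    unfolding U_bubble_def using \<open>a > 0\<close> by (intro divide_left_mono mult_pos_pos) (auto simp: alpha6_def)
qed

lemma U_bubble_has_second_partial:
  assumes "\<delta> > 0"
  shows "has_second_partial (U_bubble \<delta> \<xi>) p i
     (- 96 * \<delta>\<^sup>2 / (\<delta>\<^sup>2 + (norm (p - \<xi>))\<^sup>2) ^ 3
      + 576 * \<delta>\<^sup>2 * ((p - \<xi>) $ i)\<^sup>2 / (\<delta>\<^sup>2 + (norm (p - \<xi>))\<^sup>2) ^ 4)"
proof -
  define a where "a = (p - \<xi>) $ i"
  define S where "S = \<delta>\<^sup>2 + (norm (p - \<xi>))\<^sup>2"
  have S_line: "S + 2 * t * a + t\<^sup>2 = \<delta>\<^sup>2 + (norm (p + t *\<^sub>R axis i 1 - \<xi>))\<^sup>2" for t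
  proof -
    have "p + t *\<^sub>R axis i 1 - \<xi> = (p - \<xi>) + t *\<^sub>R axis i 1" by simp
    then show ?thesis by (simp only: S_def a_def norm_add_scaleR_axis_sq add.assoc)
  qed
  have S_pos: "S + 2 * t * a + t\<^sup>2 > 0" for t
    unfolding S_line using \<open>\<delta> > 0\<close> by (simp add: add_pos_nonneg)
  have U_line: "(\<lambda>s. U_bubble \<delta> \<xi> (p + s *\<^sub>R axis i 1)) = (\<lambda>s. 24 * \<delta>\<^sup>2 / (S + 2 * s * a + s\<^sup>2)\<^sup>2)"
    by (simp add: U_bubble_def alpha6_def S_line)
  define U' where "U' t = - 96 * \<delta>\<^sup>2 * (a + t) / (S + 2 * t * a + t\<^sup>2) ^ 3" for t
  have "((\<lambda>s. 24 * \<delta>\<^sup>2 / (S + 2 * s * a + s\<^sup>2)\<^sup>2) has_real_derivative U' t) (at t)" for t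
  proof -
    have ne: "S + 2 * t * a + t\<^sup>2 \<noteq> 0" using S_pos[of t] by simp
    have cancel: "48 * (D * ((2 * a + 2 * t) * Q)) / Q ^ 4 = 96 * D * (a + t) / Q ^ 3"
      if "Q \<noteq> 0" for Q D :: real
      using that by (simp add: field_simps eval_nat_numeral)
    show ?thesis
      unfolding U'_def by (rule derivative_eq_intros refl | simp add: ne)+ (use cancel[OF ne] in simp)
  qed
  moreover have "(U' has_real_derivative (- 96 * \<delta>\<^sup>2 / S ^ 3 + 576 * \<delta>\<^sup>2 * a\<^sup>2 / S ^ 4)) (at 0)"
  proof -
    have ne: "S \<noteq> 0" using S_pos[of 0] by simp
    have cancel: "(576 * (D * (a * (a * S\<^sup>2))) - 96 * D * S ^ 3) / S ^ 6 = 576 * D * a\<^sup>2 / S ^ 4 - 96 * D / S ^ 3"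
      for D :: real
      using ne by (simp add: field_simps eval_nat_numeral)
    show ?thesis
      unfolding U'_def by (rule derivative_eq_intros refl | simp add: ne)+ (use cancel in simp)
  qed
  ultimately show ?thesis
    unfolding has_second_partial_def U_line S_def[symmetric] a_def[symmetric]
    by (intro exI[of _ 1] conjI exI[of _ U']) auto
qed

text \<open>The bubble solves \<open>-\<Delta>U = U\<^sup>2\<close> in dimension six; this is where \<open>\<alpha>\<^sub>6 = 24\<close> is needed.\<close>
lemma U_bubble_second_partials_sum:
  assumes "\<delta> > 0"
  shows "(\<Sum>i\<in>UNIV. - 96 * \<delta>\<^sup>2 / (\<delta>\<^sup>2 + (norm (p - \<xi>))\<^sup>2) ^ 3
      + 576 * \<delta>\<^sup>2 * ((p - \<xi>) $ i)\<^sup>2 / (\<delta>\<^sup>2 + (norm (p - \<xi>))\<^sup>2) ^ 4) = - (U_bubble \<delta> \<xi> p)\<^sup>2"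
proof -
  define N where "N = (norm (p - \<xi>))\<^sup>2"
  have S: "\<delta>\<^sup>2 + N > 0" using assms by (simp add: N_def add_pos_nonneg)
  have "(\<Sum>i\<in>UNIV. 576 * \<delta>\<^sup>2 * ((p - \<xi>) $ i)\<^sup>2 / (\<delta>\<^sup>2 + N) ^ 4)
      = 576 * \<delta>\<^sup>2 * (\<Sum>i\<in>UNIV. ((p - \<xi>) $ i)\<^sup>2) / (\<delta>\<^sup>2 + N) ^ 4"
    by (simp add: sum_divide_distrib sum_distrib_left)
  also have "\<dots> = 576 * \<delta>\<^sup>2 * N / (\<delta>\<^sup>2 + N) ^ 4"
    by (simp only: sum_sq_vec_nth_eq_norm_sq N_def)
  finally have squares: "(\<Sum>i\<in>UNIV. 576 * \<delta>\<^sup>2 * ((p - \<xi>) $ i)\<^sup>2 / (\<delta>\<^sup>2 + N) ^ 4)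
      = 576 * \<delta>\<^sup>2 * N / (\<delta>\<^sup>2 + N) ^ 4" .
  have "(\<Sum>i\<in>UNIV. - 96 * \<delta>\<^sup>2 / (\<delta>\<^sup>2 + N) ^ 3 + 576 * \<delta>\<^sup>2 * ((p - \<xi>) $ i)\<^sup>2 / (\<delta>\<^sup>2 + N) ^ 4)
      = - 576 * \<delta>\<^sup>2 / (\<delta>\<^sup>2 + N) ^ 3 + 576 * \<delta>\<^sup>2 * N / (\<delta>\<^sup>2 + N) ^ 4"
    by (simp only: sum.distrib squares) simp
  also have "\<dots> = - (24 * \<delta>\<^sup>2 / (\<delta>\<^sup>2 + N)\<^sup>2)\<^sup>2"
  proof -
    have "- 576 * \<delta>\<^sup>2 / S ^ 3 + 576 * \<delta>\<^sup>2 * (S - \<delta>\<^sup>2) / S ^ 4 = - (24 * \<delta>\<^sup>2 / S\<^sup>2)\<^sup>2"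
      if "S \<noteq> 0" for S :: real
      using that by (simp add: field_simps eval_nat_numeral)
    from this[of "\<delta>\<^sup>2 + N"] show ?thesis using S by simp
  qed
  finally show ?thesis by (simp add: U_bubble_def alpha6_def N_def)
qed

lemma U_bubble_has_laplacian:
  assumes "\<delta> > 0"
  shows "has_laplacian (U_bubble \<delta> \<xi>) p (- (U_bubble \<delta> \<xi> p)\<^sup>2)"
  unfolding has_laplacian_def
  by (rule exI, rule conjI, rule allI, rule U_bubble_has_second_partial[OF assms],
      rule U_bubble_second_partials_sum[OF assms])

text \<open>Both bounds come from the maximum principle applied to \<open>P - U\<close> and \<open>U - P\<close>, which are
  harmonic since \<open>-\<Delta>P = -\<Delta>U = U\<^sup>2\<close>.\<close>
lemma projected_bubble_bounds:
  fixes P :: "R6 \<Rightarrow> real"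
  assumes "bounded \<Omega>" "open \<Omega>" "\<delta> > 0"
    and "dirichlet_class \<Omega> P"
    and P_eq: "\<forall>x\<in>\<Omega>. - laplacian P x = (U_bubble \<delta> \<xi> x)\<^sup>2"
    and U_boundary: "\<forall>y\<in>frontier \<Omega>. U_bubble \<delta> \<xi> y \<le> M"
  shows "\<forall>x\<in>\<Omega>. P x \<le> U_bubble \<delta> \<xi> x \<and> U_bubble \<delta> \<xi> x - M \<le> P x"
proof -
  have C2: "Ck_on 2 \<Omega> P" and P_cont: "continuous_on (closure \<Omega>) P" and P0: "\<forall>x\<in>frontier \<Omega>. P x = 0"
    using \<open>dirichlet_class \<Omega> P\<close> unfolding dirichlet_class_def by auto
  have U_cont: "continuous_on (closure \<Omega>) (U_bubble \<delta> \<xi>)"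
    using continuous_on_U_bubble \<open>\<delta> > 0\<close> .
  have P_lap: "has_laplacian P p (- (U_bubble \<delta> \<xi> p)\<^sup>2)" if "p \<in> \<Omega>" for p
    using Ck_on_2_has_laplacian[OF C2 \<open>open \<Omega>\<close> that] P_eq that by (metis minus_minus)
  have harmonic: "has_laplacian (\<lambda>x. P x - U_bubble \<delta> \<xi> x) p 0"
    "has_laplacian (\<lambda>x. U_bubble \<delta> \<xi> x - P x) p 0" if "p \<in> \<Omega>" for p
    using has_laplacian_diff[OF P_lap[OF that] U_bubble_has_laplacian[OF \<open>\<delta> > 0\<close>, of \<xi> p]]
      has_laplacian_diff[OF U_bubble_has_laplacian[OF \<open>\<delta> > 0\<close>, of \<xi> p] P_lap[OF that]] by simp_all
  have "\<forall>x\<in>\<Omega>. P x - U_bubble \<delta> \<xi> x \<le> 0"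
    using harmonic(1) P0 U_bubble_nonneg
    by (intro weak_maximum_principle[OF \<open>bounded \<Omega>\<close> \<open>open \<Omega>\<close>])
      (auto intro!: continuous_intros P_cont U_cont)
  moreover have "\<forall>x\<in>\<Omega>. U_bubble \<delta> \<xi> x - P x \<le> M"
    using harmonic(2) P0 U_boundary
    by (intro weak_maximum_principle[OF \<open>bounded \<Omega>\<close> \<open>open \<Omega>\<close>])
      (auto intro!: continuous_intros P_cont U_cont)
  ultimately show ?thesis by auto
qed

section \<open>Superlevel sets of the bubble profile\<close>

definition bubble_radius :: "real \<Rightarrow> real \<Rightarrow> real \<Rightarrow> real" where
  "bubble_radius \<alpha> L \<delta> = sqrt (sqrt (\<alpha> / L) - \<delta>)"

text \<open>The superlevel set \<open>{\<alpha>\<delta>\<^sup>2/(\<delta>\<^sup>2+n\<^sup>2)\<^sup>2 > L}\<close> of the bubble profile is exactly the ball of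
  radius \<open>bubble_radius \<alpha> L \<delta> \<cdot> \<surd>\<delta>\<close>; for \<open>\<surd>(\<alpha>/L) < \<delta>\<close> both sides are false, since then the
  radius is the negative \<open>sqrt\<close> of a negative number.\<close>
lemma bubble_profile_gt_iff:
  assumes "\<alpha> > 0" "L > 0" "\<delta> > 0" "n \<ge> 0"
  shows "L < \<alpha> * \<delta>\<^sup>2 / (\<delta>\<^sup>2 + n\<^sup>2)\<^sup>2 \<longleftrightarrow> n < bubble_radius \<alpha> L \<delta> * sqrt \<delta>"
proof -
  define q where "q = sqrt (\<alpha> / L)"
  have q: "q > 0" "q\<^sup>2 = \<alpha> / L" using assms by (simp_all add: q_def)
  have D: "\<delta>\<^sup>2 + n\<^sup>2 > 0" using assms by (simp add: add_pos_nonneg)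
  have "\<alpha> * \<delta>\<^sup>2 = L * (\<delta> * q)\<^sup>2" using q(2) \<open>L > 0\<close> by (simp add: power_mult_distrib)
  then have "L < \<alpha> * \<delta>\<^sup>2 / (\<delta>\<^sup>2 + n\<^sup>2)\<^sup>2 \<longleftrightarrow> L * (\<delta>\<^sup>2 + n\<^sup>2)\<^sup>2 < L * (\<delta> * q)\<^sup>2"
    using D by (simp only: pos_less_divide_eq zero_less_power)
  also have "\<dots> \<longleftrightarrow> (\<delta>\<^sup>2 + n\<^sup>2)\<^sup>2 < (\<delta> * q)\<^sup>2"
    using \<open>L > 0\<close> by simp
  also have "\<dots> \<longleftrightarrow> \<delta>\<^sup>2 + n\<^sup>2 < \<delta> * q"
    using D q(1) assms by (intro sq_less_sq_iff) auto
  also have "\<dots> \<longleftrightarrow> n\<^sup>2 < (q - \<delta>) * \<delta>"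
    by (simp add: algebra_simps power2_eq_square)
  also have "\<dots> \<longleftrightarrow> n < sqrt ((q - \<delta>) * \<delta>)"
    using assms by (simp add: less_sqrt_iff_sq_less)
  finally show ?thesis
    by (simp add: bubble_radius_def q_def real_sqrt_mult)
qed

lemma bubble_radius_antimono:
  assumes "\<alpha> \<ge> 0" "0 < L" "L \<le> L'" "\<delta> \<le> \<delta>'"
  shows "bubble_radius \<alpha> L' \<delta>' \<le> bubble_radius \<alpha> L \<delta>"
  unfolding bubble_radius_def using assms
  by (intro real_sqrt_le_mono diff_mono divide_left_mono) auto

lemma bubble_radius_zero: "bubble_radius \<alpha> L 0 = (\<alpha> / L) powr (1/4)" if "\<alpha> / L \<ge> 0"
  using that by (simp add: bubble_radius_def sqrt_sqrt_eq_powr_quarter)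

section \<open>The perturbed profile near its maximum\<close>

definition drop_within :: "('a::metric_space \<Rightarrow> real) \<Rightarrow> 'a set \<Rightarrow> 'a \<Rightarrow> real \<Rightarrow> real" where
  "drop_within u S x0 s = (SUP x \<in> S \<inter> cball x0 s. u x0 - u x)"

lemma drop_within_upper:
  assumes "bounded (u ` S)" "x \<in> S" "dist x0 x \<le> s"
  shows "u x0 - u x \<le> drop_within u S x0 s"
proof -
  obtain B where B: "\<forall>y\<in>S. \<bar>u y\<bar> \<le> B"
    using assms(1) unfolding bounded_iff by auto
  have "bdd_above ((\<lambda>x. u x0 - u x) ` (S \<inter> cball x0 s))"
    by (rule bdd_aboveI2[where M = "\<bar>u x0\<bar> + B"]) (use B in force)
  then show ?thesis
    unfolding drop_within_def using assms(2,3) by (intro cSUP_upper) auto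
qed

lemma tendsto_drop_within:
  assumes "bounded (u ` S)" "x0 \<in> S" "continuous (at x0 within S) u"
  shows "(drop_within u S x0 \<longlongrightarrow> 0) (at_right 0)"
proof (rule tendstoI)
  fix e :: real assume "e > 0"
  then obtain s0 where s0: "s0 > 0" "\<forall>x\<in>S. dist x x0 < s0 \<longrightarrow> dist (u x) (u x0) < e / 2"
    using assms(3) unfolding continuous_within_eps_delta by (meson half_gt_zero)
  have "dist (drop_within u S x0 s) 0 < e" if "0 < s" "s < s0" for s
  proof -
    have "0 \<le> drop_within u S x0 s"
      using drop_within_upper[OF assms(1,2), of x0 s] that by simp
    moreover have "drop_within u S x0 s \<le> e / 2"
      unfolding drop_within_def
    proof (rule cSUP_least)
      show "S \<inter> cball x0 s \<noteq> {}" using assms(2) that by auto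
      fix x assume x: "x \<in> S \<inter> cball x0 s"
      then have "dist x x0 < s0" using that by (simp add: dist_commute)
      then have "dist (u x) (u x0) < e / 2" using s0(2) x by blast
      then show "u x0 - u x \<le> e / 2" unfolding dist_real_def by linarith
    qed
    ultimately show ?thesis using \<open>e > 0\<close> by simp
  qed
  then show "\<forall>\<^sub>F s in at_right 0. dist (drop_within u S x0 s) 0 < e"
    unfolding eventually_at_right_field using s0(1) by blast
qed

locale perturbed_bubble =
  fixes \<Omega> :: "R6 set" and u0 v0 :: "R6 \<Rightarrow> real" and xi0 :: R6
    and PU :: "real \<Rightarrow> R6 \<Rightarrow> R6 \<Rightarrow> real"
  assumes open_dom: "open \<Omega>" and bounded_dom: "bounded \<Omega>"
    and u0_cont: "continuous_on (closure \<Omega>) u0" and v0_cont: "continuous_on (closure \<Omega>) v0"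
    and xi0_in: "xi0 \<in> \<Omega>" and xi0_max: "\<forall>x\<in>\<Omega>. u0 x \<le> u0 xi0" and xi0_pos: "u0 xi0 > 0"
    and PU: "\<forall>\<delta>>0. \<forall>\<xi>. dirichlet_class \<Omega> (PU \<delta> \<xi>) \<and>
               (\<forall>x\<in>\<Omega>. - laplacian (PU \<delta> \<xi>) x = (U_bubble \<delta> \<xi> x)\<^sup>2)"
begin

definition r0 :: real where "r0 = infdist xi0 (- \<Omega>)"

lemma r0_pos: "r0 > 0"
proof -
  have "- \<Omega> \<noteq> {}" using bounded_dom by (metis Compl_empty_eq double_compl not_bounded_UNIV)
  then show ?thesis
    unfolding r0_def using open_dom xi0_in by (intro infdist_pos_not_in_closed) auto
qed

lemma ball_r0_subset: "ball xi0 r0 \<subseteq> \<Omega>"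
  unfolding r0_def using infdist_le[of _ "- \<Omega>" xi0] by fastforce

lemma bounded_image_dom:
  assumes "continuous_on (closure \<Omega>) f"
  shows "bounded (f ` \<Omega>)"
  using compact_continuous_image[OF assms] bounded_dom
  by (metis bounded_subset closure_subset compact_closure compact_imp_bounded image_mono)

definition V :: real where "V = (SUP x\<in>\<Omega>. \<bar>v0 x\<bar>)"

lemma abs_v0_le_V:
  assumes "x \<in> \<Omega>"
  shows "\<bar>v0 x\<bar> \<le> V"
proof -
  obtain B where "\<forall>y\<in>\<Omega>. \<bar>v0 y\<bar> \<le> B"
    using bounded_image_dom[OF v0_cont] unfolding bounded_iff by auto
  then show ?thesis
    unfolding V_def using assms by (intro cSUP_upper bdd_aboveI2) auto
qed

lemma V_nonneg: "V \<ge> 0"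
  using abs_v0_le_V[OF xi0_in] by linarith

text \<open>\<open>K\<delta>\<^sup>2\<close> bounds \<open>U_bubble \<delta> \<xi>\<close> at distance \<open>r0/2\<close> from \<open>\<xi>\<close>, hence on \<open>\<partial>\<Omega>\<close> whenever \<open>|\<xi> - xi0| \<le> r0/2\<close>.\<close>
definition K :: real where "K = 16 * alpha6 / r0 ^ 4"

definition u0_drop :: "real \<Rightarrow> real" where "u0_drop = drop_within u0 \<Omega> xi0"

lemma PU_bounds:
  assumes "\<delta> > 0" "norm (\<xi> - xi0) \<le> r0 / 2"
  shows "\<forall>x\<in>\<Omega>. PU \<delta> \<xi> x \<le> U_bubble \<delta> \<xi> x \<and> U_bubble \<delta> \<xi> x - K * \<delta>\<^sup>2 \<le> PU \<delta> \<xi> x"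
proof (rule projected_bubble_bounds[OF bounded_dom open_dom \<open>\<delta> > 0\<close>])
  show "dirichlet_class \<Omega> (PU \<delta> \<xi>)" "\<forall>x\<in>\<Omega>. - laplacian (PU \<delta> \<xi>) x = (U_bubble \<delta> \<xi> x)\<^sup>2"
    using PU \<open>\<delta> > 0\<close> by blast+
  show "\<forall>y\<in>frontier \<Omega>. U_bubble \<delta> \<xi> y \<le> K * \<delta>\<^sup>2"
  proof
    fix y assume "y \<in> frontier \<Omega>"
    then have "y \<notin> ball xi0 r0" using ball_r0_subset open_dom frontier_disjoint_eq by blast
    then have "r0 \<le> norm (y - \<xi>) + norm (\<xi> - xi0)"
      using norm_triangle_ineq[of "y - \<xi>" "\<xi> - xi0"] by (simp add: dist_norm norm_minus_commute)
    then have "U_bubble \<delta> \<xi> y \<le> alpha6 * \<delta>\<^sup>2 / (r0 / 2) ^ 4"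
      using assms(2) r0_pos by (intro U_bubble_le_at_distance) auto
    then show "U_bubble \<delta> \<xi> y \<le> K * \<delta>\<^sup>2" by (simp add: K_def power_divide algebra_simps)
  qed
qed

lemma abs_perturbation_le: "x \<in> \<Omega> \<Longrightarrow> \<bar>\<epsilon> * v0 x\<bar> \<le> \<bar>\<epsilon>\<bar> * V"
  unfolding abs_mult using abs_v0_le_V by (intro mult_left_mono) auto

lemma perturbation_upper: "x \<in> \<Omega> \<Longrightarrow> u0 x + \<epsilon> * v0 x \<le> u0 xi0 + \<bar>\<epsilon>\<bar> * V"
  using xi0_max abs_perturbation_le[of x \<epsilon>] by fastforce

lemma perturbation_lower:
  assumes "x \<in> \<Omega>" "dist xi0 x \<le> s"
  shows "u0 xi0 - \<bar>\<epsilon>\<bar> * V - u0_drop s \<le> u0 x + \<epsilon> * v0 x"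
  using drop_within_upper[OF bounded_image_dom[OF u0_cont] assms] abs_perturbation_le[OF assms(1), of \<epsilon>]
  unfolding u0_drop_def by linarith

lemma region_between_balls:
  fixes \<epsilon> \<delta> s :: real and \<xi> :: R6
  defines "A \<equiv> {x\<in>\<Omega>. 0 < u0 x + \<epsilon> * v0 x \<and> u0 x + \<epsilon> * v0 x < PU \<delta> \<xi> x} \<inter> ball \<xi> (\<delta> powr (1/4))"
    and "Hi \<equiv> u0 xi0 + \<bar>\<epsilon>\<bar> * V + K * \<delta>\<^sup>2"
    and "Lo \<equiv> u0 xi0 - \<bar>\<epsilon>\<bar> * V - u0_drop s"
  assumes "\<delta> > 0" and near: "norm (\<xi> - xi0) \<le> r0 / 2"
    and reach: "norm (\<xi> - xi0) + \<delta> powr (1/4) \<le> s" "s < r0"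
    and "Lo > 0" and inner: "bubble_radius alpha6 Hi \<delta> * sqrt \<delta> \<le> \<delta> powr (1/4)"
  shows "ball \<xi> (bubble_radius alpha6 Hi \<delta> * sqrt \<delta>) \<subseteq> A"
    and "A \<subseteq> ball \<xi> (bubble_radius alpha6 Lo 0 * sqrt \<delta>)"
proof -
  have "Hi > 0" using xi0_pos V_nonneg K_def r0_pos unfolding Hi_def
    by (auto simp: alpha6_def intro!: add_pos_nonneg)
  have alpha6: "alpha6 > 0" by (simp add: alpha6_def)
  have PU_bounds': "\<forall>x\<in>\<Omega>. PU \<delta> \<xi> x \<le> U_bubble \<delta> \<xi> x \<and> U_bubble \<delta> \<xi> x - K * \<delta>\<^sup>2 \<le> PU \<delta> \<xi> x"
    using PU_bounds[OF \<open>\<delta> > 0\<close> near] .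
  have U_eq: "U_bubble \<delta> \<xi> x = alpha6 * \<delta>\<^sup>2 / (\<delta>\<^sup>2 + (dist \<xi> x)\<^sup>2)\<^sup>2" for x
    by (simp add: U_bubble_def dist_norm norm_minus_commute)
  have close: "x \<in> \<Omega> \<and> Lo \<le> u0 x + \<epsilon> * v0 x" if "dist \<xi> x < \<delta> powr (1/4)" for x
  proof -
    have "dist xi0 x \<le> norm (\<xi> - xi0) + dist \<xi> x"
      using dist_triangle[of xi0 x \<xi>] by (simp add: dist_norm norm_minus_commute)
    then have "dist xi0 x \<le> s" using that reach(1) by linarith
    moreover then have "x \<in> \<Omega>" using reach(2) ball_r0_subset by auto
    ultimately show ?thesis using perturbation_lower unfolding Lo_def by blast
  qed
  show "ball \<xi> (bubble_radius alpha6 Hi \<delta> * sqrt \<delta>) \<subseteq> A"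
  proof
    fix x assume x: "x \<in> ball \<xi> (bubble_radius alpha6 Hi \<delta> * sqrt \<delta>)"
    then have in_ball: "dist \<xi> x < \<delta> powr (1/4)" using inner by simp
    then have "x \<in> \<Omega>" "0 < u0 x + \<epsilon> * v0 x" using close \<open>Lo > 0\<close> by force+
    have "Hi < U_bubble \<delta> \<xi> x"
      unfolding U_eq using x bubble_profile_gt_iff[OF alpha6 \<open>Hi > 0\<close> \<open>\<delta> > 0\<close>] by simp
    then have "u0 x + \<epsilon> * v0 x < PU \<delta> \<xi> x"
      using perturbation_upper[OF \<open>x \<in> \<Omega>\<close>, of \<epsilon>] PU_bounds' \<open>x \<in> \<Omega>\<close> unfolding Hi_def by fastforce
    then show "x \<in> A"
      unfolding A_def using \<open>x \<in> \<Omega>\<close> \<open>0 < u0 x + \<epsilon> * v0 x\<close> in_ball by simp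
  qed
  show "A \<subseteq> ball \<xi> (bubble_radius alpha6 Lo 0 * sqrt \<delta>)"
  proof
    fix x assume "x \<in> A"
    then have "dist \<xi> x < \<delta> powr (1/4)" "u0 x + \<epsilon> * v0 x < PU \<delta> \<xi> x"
      unfolding A_def by auto
    then have "Lo < U_bubble \<delta> \<xi> x" using close PU_bounds' by fastforce
    then have "dist \<xi> x < bubble_radius alpha6 Lo \<delta> * sqrt \<delta>"
      unfolding U_eq using bubble_profile_gt_iff[OF alpha6 \<open>Lo > 0\<close> \<open>\<delta> > 0\<close>] by simp
    also have "\<dots> \<le> bubble_radius alpha6 Lo 0 * sqrt \<delta>"
      using \<open>Lo > 0\<close> \<open>\<delta> > 0\<close> alpha6 by (intro mult_right_mono bubble_radius_antimono) auto
    finally show "x \<in> ball \<xi> (bubble_radius alpha6 Lo 0 * sqrt \<delta>)" by simp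
  qed
qed

abbreviation R0 :: real where "R0 \<equiv> bubble_radius alpha6 (u0 xi0) 0"

text \<open>For admissible \<open>(\<epsilon>, d, \<eta>)\<close> one has \<open>\<delta> \<le> |\<epsilon>|/\<sigma>\<close> and \<open>|\<xi> - xi0| \<le> \<surd>\<delta>/\<sigma>\<close>, so every point of
  \<open>B(\<xi>, \<delta>\<^sup>1\<^sup>/\<^sup>4)\<close> lies within \<open>reach \<sigma> \<epsilon>\<close> of \<open>xi0\<close>.\<close>
definition reach :: "real \<Rightarrow> real \<Rightarrow> real" where
  "reach \<sigma> \<epsilon> = sqrt (sqrt (\<bar>\<epsilon>\<bar> / \<sigma>)) + sqrt (\<bar>\<epsilon>\<bar> / \<sigma>) / \<sigma>"

text \<open>The radii \<open>R\<^sup>1\<^sub>\<delta>\<close> and \<open>R\<^sup>2\<^sub>\<delta>\<close> of the statement: the superlevel radii of the bubble at the upper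
  bound of \<open>u0 + \<epsilon>v0\<close> raised by \<open>K\<delta>\<^sup>2\<close>, and at its lower bound near \<open>\<xi>\<close>.\<close>
definition inner_radius :: "real \<Rightarrow> real \<Rightarrow> real" where
  "inner_radius \<epsilon> \<delta> = bubble_radius alpha6 (u0 xi0 + \<bar>\<epsilon>\<bar> * V + K * \<delta>\<^sup>2) \<delta>"

definition outer_radius :: "real \<Rightarrow> real \<Rightarrow> real" where
  "outer_radius \<sigma> \<epsilon> = bubble_radius alpha6 (u0 xi0 - \<bar>\<epsilon>\<bar> * V - u0_drop (reach \<sigma> \<epsilon>)) 0"

lemma R0_pos: "R0 > 0"
  using xi0_pos by (simp add: bubble_radius_def alpha6_def)

lemma inner_radius_antimono: "0 \<le> \<delta> \<Longrightarrow> \<delta> \<le> \<delta>' \<Longrightarrow> inner_radius \<epsilon> \<delta>' \<le> inner_radius \<epsilon> \<delta>"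
  unfolding inner_radius_def using xi0_pos V_nonneg r0_pos
  by (intro bubble_radius_antimono add_left_mono mult_left_mono power_mono)
    (auto simp: K_def alpha6_def intro!: add_pos_nonneg)

lemma inner_radius_le_R0: "0 \<le> \<delta> \<Longrightarrow> inner_radius \<epsilon> \<delta> \<le> R0"
  unfolding inner_radius_def using xi0_pos V_nonneg r0_pos
  by (intro bubble_radius_antimono) (auto simp: K_def alpha6_def)

lemma tendsto_inner_radius: "\<sigma> > 0 \<Longrightarrow> ((\<lambda>\<epsilon>. inner_radius \<epsilon> (\<bar>\<epsilon>\<bar> / \<sigma>)) \<longlongrightarrow> R0) (at 0)"
  unfolding inner_radius_def bubble_radius_def using xi0_pos
  by (auto intro!: tendsto_eq_intros)

lemma reach_tendsto_at_right: "\<sigma> > 0 \<Longrightarrow> filterlim (reach \<sigma>) (at_right 0) (at 0)"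
proof -
  assume "\<sigma> > 0"
  have "\<forall>\<^sub>F \<epsilon> in at 0. reach \<sigma> \<epsilon> > 0"
    unfolding eventually_at using \<open>\<sigma> > 0\<close> by (intro exI[of _ 1]) (auto simp: reach_def add_pos_nonneg)
  moreover have "(reach \<sigma> \<longlongrightarrow> 0) (at 0)"
    unfolding reach_def using \<open>\<sigma> > 0\<close> by (auto intro!: tendsto_eq_intros)
  ultimately show ?thesis
    unfolding filterlim_at by (auto elim: eventually_mono)
qed

lemma tendsto_u0_drop_reach: "\<sigma> > 0 \<Longrightarrow> ((\<lambda>\<epsilon>. u0_drop (reach \<sigma> \<epsilon>)) \<longlongrightarrow> 0) (at 0)"
  unfolding u0_drop_def
proof (rule filterlim_compose[OF tendsto_drop_within reach_tendsto_at_right])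
  show "continuous (at xi0 within \<Omega>) u0"
    using continuous_on_subset[OF u0_cont closure_subset] xi0_in
    by (simp add: continuous_on_eq_continuous_within)
qed (use bounded_image_dom[OF u0_cont] xi0_in in auto)

lemma tendsto_outer_radius: "\<sigma> > 0 \<Longrightarrow> (outer_radius \<sigma> \<longlongrightarrow> R0) (at 0)"
  unfolding outer_radius_def bubble_radius_def using xi0_pos
  by (auto intro!: tendsto_eq_intros tendsto_u0_drop_reach)

definition small_perturbation :: "real \<Rightarrow> real \<Rightarrow> bool" where
  "small_perturbation \<sigma> \<epsilon> \<longleftrightarrow>
     sqrt (\<bar>\<epsilon>\<bar> / \<sigma>) / \<sigma> \<le> r0 / 2 \<and> reach \<sigma> \<epsilon> < r0 \<and>
     0 < u0 xi0 - \<bar>\<epsilon>\<bar> * V - u0_drop (reach \<sigma> \<epsilon>) \<and> 0 < inner_radius \<epsilon> (\<bar>\<epsilon>\<bar> / \<sigma>) \<and>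
     R0 * sqrt (sqrt (\<bar>\<epsilon>\<bar> / \<sigma>)) \<le> 1"

lemma eventually_small_perturbation:
  assumes "\<sigma> > 0"
  shows "\<forall>\<^sub>F \<epsilon> in at 0. small_perturbation \<sigma> \<epsilon>"
proof -
  have "((\<lambda>\<epsilon>. sqrt (\<bar>\<epsilon>\<bar> / \<sigma>) / \<sigma>) \<longlongrightarrow> 0) (at 0)"
    and "((\<lambda>\<epsilon>. R0 * sqrt (sqrt (\<bar>\<epsilon>\<bar> / \<sigma>))) \<longlongrightarrow> 0) (at 0)"
    and "((\<lambda>\<epsilon>. u0 xi0 - \<bar>\<epsilon>\<bar> * V - u0_drop (reach \<sigma> \<epsilon>)) \<longlongrightarrow> u0 xi0) (at 0)"
    using assms by (auto intro!: tendsto_eq_intros tendsto_u0_drop_reach)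
  from order_tendstoD(2)[OF this(1), of "r0 / 2"] order_tendstoD(2)[OF this(2), of 1]
    order_tendstoD(1)[OF this(3), of 0]
  have "\<forall>\<^sub>F \<epsilon> in at 0. sqrt (\<bar>\<epsilon>\<bar> / \<sigma>) / \<sigma> < r0 / 2"
    "\<forall>\<^sub>F \<epsilon> in at 0. R0 * sqrt (sqrt (\<bar>\<epsilon>\<bar> / \<sigma>)) < 1"
    "\<forall>\<^sub>F \<epsilon> in at 0. 0 < u0 xi0 - \<bar>\<epsilon>\<bar> * V - u0_drop (reach \<sigma> \<epsilon>)"
    using r0_pos xi0_pos by auto
  moreover have "\<forall>\<^sub>F \<epsilon> in at 0. reach \<sigma> \<epsilon> < r0"
    using reach_tendsto_at_right[OF assms] order_tendstoD(2) r0_pos unfolding filterlim_at by blast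
  moreover have "\<forall>\<^sub>F \<epsilon> in at 0. 0 < inner_radius \<epsilon> (\<bar>\<epsilon>\<bar> / \<sigma>)"
    using order_tendstoD(1)[OF tendsto_inner_radius[OF assms] R0_pos] .
  ultimately show ?thesis
    unfolding small_perturbation_def by eventually_elim auto
qed

lemma admissible_scale_bounds:
  assumes "\<sigma> > 0" "\<epsilon> \<noteq> 0" "\<sigma> < d" "d < 1 / \<sigma>" "norm \<eta> \<le> 1 / \<sigma>"
  shows "0 < \<bar>\<epsilon>\<bar> * d" "\<bar>\<epsilon>\<bar> * d \<le> \<bar>\<epsilon>\<bar> / \<sigma>"
    "norm (sqrt (\<bar>\<epsilon>\<bar> * d) *\<^sub>R \<eta>) \<le> sqrt (\<bar>\<epsilon>\<bar> / \<sigma>) / \<sigma>"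
proof -
  show "0 < \<bar>\<epsilon>\<bar> * d" using assms by simp
  show le: "\<bar>\<epsilon>\<bar> * d \<le> \<bar>\<epsilon>\<bar> / \<sigma>"
    using assms mult_left_mono[of d "1 / \<sigma>" "\<bar>\<epsilon>\<bar>"] by simp
  have "norm (sqrt (\<bar>\<epsilon>\<bar> * d) *\<^sub>R \<eta>) = sqrt (\<bar>\<epsilon>\<bar> * d) * norm \<eta>"
    using assms by simp
  also have "\<dots> \<le> sqrt (\<bar>\<epsilon>\<bar> / \<sigma>) * (1 / \<sigma>)"
    using le assms by (intro mult_mono) auto
  finally show "norm (sqrt (\<bar>\<epsilon>\<bar> * d) *\<^sub>R \<eta>) \<le> sqrt (\<bar>\<epsilon>\<bar> / \<sigma>) / \<sigma>" by simp
qed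

lemma inner_radius_scaled_le:
  assumes "0 < \<delta>" "\<delta> \<le> t" "R0 * sqrt (sqrt t) \<le> 1"
  shows "inner_radius \<epsilon> \<delta> * sqrt \<delta> \<le> sqrt (sqrt \<delta>)"
proof -
  have "inner_radius \<epsilon> \<delta> * sqrt \<delta> \<le> R0 * sqrt (sqrt \<delta>) * sqrt (sqrt \<delta>)"
    using inner_radius_le_R0[of \<delta> \<epsilon>] assms(1) by (simp add: mult.assoc mult_right_mono)
  also have "\<dots> \<le> 1 * sqrt (sqrt \<delta>)"
  proof (rule mult_right_mono)
    have "R0 * sqrt (sqrt \<delta>) \<le> R0 * sqrt (sqrt t)"
      using R0_pos assms(2) by (intro mult_left_mono) auto
    then show "R0 * sqrt (sqrt \<delta>) \<le> 1" using assms(3) by linarith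
  qed (use assms(1) in simp)
  finally show ?thesis by simp
qed

lemma admissible_region_between_balls:
  fixes \<epsilon> d :: real and \<eta> :: R6
  defines "\<delta> \<equiv> \<bar>\<epsilon>\<bar> * d"
  defines "\<xi> \<equiv> xi0 + sqrt \<delta> *\<^sub>R \<eta>"
  assumes "\<sigma> > 0" "small_perturbation \<sigma> \<epsilon>" "\<epsilon> \<noteq> 0" "\<sigma> < d" "d < 1 / \<sigma>" "norm \<eta> \<le> 1 / \<sigma>"
  shows "0 < inner_radius \<epsilon> \<delta> \<and> 0 < outer_radius \<sigma> \<epsilon> \<and>
    ball \<xi> (inner_radius \<epsilon> \<delta> * sqrt \<delta>)
      \<subseteq> {x\<in>\<Omega>. 0 < u0 x + \<epsilon> * v0 x \<and> u0 x + \<epsilon> * v0 x < PU \<delta> \<xi> x} \<inter> ball \<xi> (\<delta> powr (1/4)) \<and>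
    {x\<in>\<Omega>. 0 < u0 x + \<epsilon> * v0 x \<and> u0 x + \<epsilon> * v0 x < PU \<delta> \<xi> x} \<inter> ball \<xi> (\<delta> powr (1/4))
      \<subseteq> ball \<xi> (outer_radius \<sigma> \<epsilon> * sqrt \<delta>)"
proof -
  define t where "t = \<bar>\<epsilon>\<bar> / \<sigma>"
  note small = assms(4)[unfolded small_perturbation_def t_def[symmetric]]
  have "\<delta> > 0" "\<delta> \<le> t" and shift: "norm (\<xi> - xi0) \<le> sqrt t / \<sigma>"
    using admissible_scale_bounds[OF assms(3,5-8)] by (simp_all add: \<delta>_def \<xi>_def t_def)
  have quarter: "\<delta> powr (1/4) = sqrt (sqrt \<delta>)" using \<open>\<delta> > 0\<close> by (simp add: sqrt_sqrt_eq_powr_quarter)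
  have "norm (\<xi> - xi0) + \<delta> powr (1/4) \<le> reach \<sigma> \<epsilon>"
  proof -
    have "sqrt (sqrt \<delta>) \<le> sqrt (sqrt t)" using \<open>\<delta> \<le> t\<close> by simp
    then show ?thesis using shift unfolding quarter reach_def t_def[symmetric] by linarith
  qed
  moreover have "inner_radius \<epsilon> \<delta> * sqrt \<delta> \<le> \<delta> powr (1/4)"
    unfolding quarter using inner_radius_scaled_le \<open>\<delta> > 0\<close> \<open>\<delta> \<le> t\<close> small by blast
  moreover have "norm (\<xi> - xi0) \<le> r0 / 2" using shift small by linarith
  ultimately have "ball \<xi> (inner_radius \<epsilon> \<delta> * sqrt \<delta>)
      \<subseteq> {x\<in>\<Omega>. 0 < u0 x + \<epsilon> * v0 x \<and> u0 x + \<epsilon> * v0 x < PU \<delta> \<xi> x} \<inter> ball \<xi> (\<delta> powr (1/4))"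
    "{x\<in>\<Omega>. 0 < u0 x + \<epsilon> * v0 x \<and> u0 x + \<epsilon> * v0 x < PU \<delta> \<xi> x} \<inter> ball \<xi> (\<delta> powr (1/4))
      \<subseteq> ball \<xi> (outer_radius \<sigma> \<epsilon> * sqrt \<delta>)"
    using region_between_balls[OF \<open>\<delta> > 0\<close>, of \<xi> "reach \<sigma> \<epsilon>" \<epsilon>] small
    unfolding inner_radius_def outer_radius_def by auto
  moreover have "0 < outer_radius \<sigma> \<epsilon>"
    using small by (simp add: outer_radius_def bubble_radius_def alpha6_def)
  moreover have "0 < inner_radius \<epsilon> \<delta>"
    using small inner_radius_antimono[of \<delta> t \<epsilon>] \<open>\<delta> > 0\<close> \<open>\<delta> \<le> t\<close> by simp
  ultimately show ?thesis by blast
qed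

lemma radii_converge:
  assumes "\<sigma> > 0" "e > 0"
  shows "\<exists>r>0. \<forall>\<epsilon> d. \<epsilon> \<noteq> 0 \<and> \<bar>\<epsilon>\<bar> < r \<and> \<sigma> < d \<and> d < 1 / \<sigma> \<longrightarrow>
           \<bar>inner_radius \<epsilon> (\<bar>\<epsilon>\<bar> * d) - R0\<bar> < e \<and> \<bar>outer_radius \<sigma> \<epsilon> - R0\<bar> < e"
proof -
  have "\<forall>\<^sub>F \<epsilon> in at 0. R0 - e < inner_radius \<epsilon> (\<bar>\<epsilon>\<bar> / \<sigma>) \<and> \<bar>outer_radius \<sigma> \<epsilon> - R0\<bar> < e"
    using tendsto_inner_radius[OF assms(1)] tendsto_outer_radius[OF assms(1)] assms(2)
    by (intro eventually_conj order_tendstoD(1)) (auto simp: tendsto_iff dist_real_def)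
  then obtain r where "r > 0" and r: "\<And>\<epsilon>. \<epsilon> \<noteq> 0 \<Longrightarrow> \<bar>\<epsilon>\<bar> < r \<Longrightarrow>
      R0 - e < inner_radius \<epsilon> (\<bar>\<epsilon>\<bar> / \<sigma>) \<and> \<bar>outer_radius \<sigma> \<epsilon> - R0\<bar> < e"
    unfolding eventually_at dist_real_def by auto
  have "\<bar>inner_radius \<epsilon> (\<bar>\<epsilon>\<bar> * d) - R0\<bar> < e"
    if "\<epsilon> \<noteq> 0" "\<bar>\<epsilon>\<bar> < r" "\<sigma> < d" "d < 1 / \<sigma>" for \<epsilon> d
  proof -
    have "\<bar>\<epsilon>\<bar> * d \<le> \<bar>\<epsilon>\<bar> / \<sigma>"
      using that mult_left_mono[of d "1 / \<sigma>" "\<bar>\<epsilon>\<bar>"] by simp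
    then have "inner_radius \<epsilon> (\<bar>\<epsilon>\<bar> / \<sigma>) \<le> inner_radius \<epsilon> (\<bar>\<epsilon>\<bar> * d)"
      using that assms(1) by (intro inner_radius_antimono) auto
    moreover have "inner_radius \<epsilon> (\<bar>\<epsilon>\<bar> * d) \<le> R0"
      using that assms(1) by (intro inner_radius_le_R0) auto
    ultimately show ?thesis using r[OF that(1,2)] by linarith
  qed
  then show ?thesis using \<open>r > 0\<close> r by blast
qed

end

theorem mainTheorem7:
  fixes \<Omega> :: "R6 set" and u0 v0 :: "R6 \<Rightarrow> real" and lam0 :: real and xi0 :: R6
    and PU :: "real \<Rightarrow> R6 \<Rightarrow> R6 \<Rightarrow> real"
  assumes dom: "smooth_bounded_domain \<Omega>"
    and lam: "lam0 > 0"
    and u0_cl: "dirichlet_class \<Omega> u0"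
    and u0_eq: "\<forall>x\<in>\<Omega>. - laplacian u0 x = \<bar>u0 x\<bar> * u0 x + lam0 * u0 x"
    and xi0_in: "xi0 \<in> \<Omega>" and xi0_max: "\<forall>x\<in>\<Omega>. u0 x \<le> u0 xi0" and xi0_pos: "u0 xi0 > 0"
    and lam_eq: "lam0 = 2 * u0 xi0"
    and nondeg: "\<forall>w. dirichlet_class \<Omega> w \<and>
                   (\<forall>x\<in>\<Omega>. - laplacian w x = (2 * \<bar>u0 x\<bar> + lam0) * w x)
                   \<longrightarrow> (\<forall>x\<in>\<Omega>. w x = 0)"
    and v0_cl: "dirichlet_class \<Omega> v0"
    and v0_eq: "\<forall>x\<in>\<Omega>. - laplacian v0 x - (2 * \<bar>u0 x\<bar> + lam0) * v0 x = u0 x"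
    and PU_cl: "\<forall>\<delta>>0. \<forall>\<xi>. dirichlet_class \<Omega> (PU \<delta> \<xi>) \<and>
                   (\<forall>x\<in>\<Omega>. - laplacian (PU \<delta> \<xi>) x = (U_bubble \<delta> \<xi> x)\<^sup>2)"
  shows "\<forall>\<sigma>>0. \<exists>eps0>0. \<exists>R1 R2 :: real \<Rightarrow> real \<Rightarrow> R6 \<Rightarrow> real.
     (\<forall>\<epsilon> d \<eta>. \<epsilon> \<noteq> 0 \<and> \<bar>\<epsilon>\<bar> < eps0 \<and> \<sigma> < d \<and> d < 1 / \<sigma> \<and> norm \<eta> \<le> 1 / \<sigma> \<longrightarrow>
        (let \<delta> = \<bar>\<epsilon>\<bar> * d; \<xi> = xi0 + sqrt \<delta> *\<^sub>R \<eta>;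
             A = {x\<in>\<Omega>. 0 < u0 x + \<epsilon> * v0 x \<and> u0 x + \<epsilon> * v0 x < PU \<delta> \<xi> x}
                 \<inter> ball \<xi> (\<delta> powr (1/4))
         in R1 \<epsilon> d \<eta> > 0 \<and> R2 \<epsilon> d \<eta> > 0 \<and>
            ball \<xi> (R1 \<epsilon> d \<eta> * sqrt \<delta>) \<subseteq> A \<and> A \<subseteq> ball \<xi> (R2 \<epsilon> d \<eta> * sqrt \<delta>))) \<and>
     (\<forall>e>0. \<exists>r>0. \<forall>\<epsilon> d \<eta>. \<epsilon> \<noteq> 0 \<and> \<bar>\<epsilon>\<bar> < min r eps0 \<and> \<sigma> < d \<and> d < 1 / \<sigma> \<and> norm \<eta> \<le> 1 / \<sigma> \<longrightarrow>
        \<bar>R1 \<epsilon> d \<eta> - (alpha6 / u0 xi0) powr (1/4)\<bar> < e \<and>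
        \<bar>R2 \<epsilon> d \<eta> - (alpha6 / u0 xi0) powr (1/4)\<bar> < e)"
proof (intro allI impI, goal_cases)
  case (1 \<sigma>)
  interpret perturbed_bubble \<Omega> u0 v0 xi0 PU
    using dom u0_cl v0_cl xi0_in xi0_max xi0_pos PU_cl
    by unfold_locales (auto simp: smooth_bounded_domain_def dirichlet_class_def)
  obtain eps0 where "eps0 > 0" and small: "\<And>\<epsilon>. \<epsilon> \<noteq> 0 \<Longrightarrow> \<bar>\<epsilon>\<bar> < eps0 \<Longrightarrow> small_perturbation \<sigma> \<epsilon>"
    using eventually_small_perturbation[OF \<open>\<sigma> > 0\<close>] unfolding eventually_at dist_real_def by auto
  have R0: "(alpha6 / u0 xi0) powr (1/4) = R0"
    using xi0_pos by (simp add: bubble_radius_zero alpha6_def)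
  show ?case
  proof (rule exI[of _ eps0], rule conjI[OF \<open>eps0 > 0\<close>],
      rule exI[of _ "\<lambda>\<epsilon> d \<eta>. inner_radius \<epsilon> (\<bar>\<epsilon>\<bar> * d)"], rule exI[of _ "\<lambda>\<epsilon> d \<eta>. outer_radius \<sigma> \<epsilon>"],
      intro conjI allI impI, goal_cases)
    case (1 \<epsilon> d \<eta>)
    then have "\<epsilon> \<noteq> 0" "\<bar>\<epsilon>\<bar> < eps0" "\<sigma> < d" "d < 1 / \<sigma>" "norm \<eta> \<le> 1 / \<sigma>" by auto
    from admissible_region_between_balls[OF \<open>\<sigma> > 0\<close> small[OF this(1,2)] this(1,3-5)]
    show ?case by (simp only: Let_def)
  next
    case (2 e)
    then obtain r where "r > 0" and r: "\<forall>\<epsilon> d. \<epsilon> \<noteq> 0 \<and> \<bar>\<epsilon>\<bar> < r \<and> \<sigma> < d \<and> d < 1 / \<sigma> \<longrightarrow>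
        \<bar>inner_radius \<epsilon> (\<bar>\<epsilon>\<bar> * d) - R0\<bar> < e \<and> \<bar>outer_radius \<sigma> \<epsilon> - R0\<bar> < e"
      using radii_converge[OF \<open>\<sigma> > 0\<close>] by blast
    then show ?case unfolding R0 by (intro exI[of _ r]) auto
  qed
qed

end
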